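(* Let $(X,\varphi,G)$ be a dynamical system, $n\in\mathbb N$ and $x=(x_1,\dots,x_n)\in X^n$. If $x$ is an $n$-IN-tuple, then $x$ is an $n$-regionally proximal tuple. In particular, every $n$-IT-tuple is an $n$-regionally proximal tuple.
   Context: $G$ is an infinite countable group acting continuously (via $\varphi$) on a compact metric space $(X,d)$. For a tuple $(A_1,\dots,A_k)$ of subsets of $X$, a set $J\subseteq G$ is an independence set if for every nonempty finite $I\subseteq J$ and every $s:I\to\{1,\dots,k\}$ we have $\bigcap_{g\in I}\varphi^{g^{-1}}A_{s(g)}\neq\emptyset$. A tuple $(x_1,\dots,x_n)\in X^n$ is an $n$-IN-tuple (resp. $n$-IT-tuple) if for every product neighborhood $U_1\times\dots\times U_n$ of it, $(U_1,\dots,U_n)$ has arbitrarily large finite independence sets (resp. an infinite independence set). A tuple $(x_1,\dots,x_n)$ is $n$-regionally proximal if for every $\varepsilon>0$ there exist $x_1',\dots,x_n'\in X$ with $d(x_i,x_i')<\varepsilon$ for all $i$ and some $g\in G$ with $d(\varphi^g x_i',\varphi^g x_j')<\varepsilon$ for all $i,j$. *)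

theory Defs
  imports "HOL-Analysis.Analysis" "HOL-Algebra.Group"
begin

definition dyn_system :: "('g, 'b) monoid_scheme \<Rightarrow> ('g \<Rightarrow> 'a::metric_space \<Rightarrow> 'a) \<Rightarrow> 'a set \<Rightarrow> bool" where
  "dyn_system G \<phi> X \<longleftrightarrow>
     group G \<and> countable (carrier G) \<and> infinite (carrier G) \<and> compact X \<and>
     (\<forall>g\<in>carrier G. continuous_on X (\<phi> g) \<and> \<phi> g ` X \<subseteq> X) \<and>
     (\<forall>x\<in>X. \<phi> \<one>\<^bsub>G\<^esub> x = x) \<and>
     (\<forall>g\<in>carrier G. \<forall>h\<in>carrier G. \<forall>x\<in>X. \<phi> (g \<otimes>\<^bsub>G\<^esub> h) x = \<phi> g (\<phi> h x))"

definition indep_set :: "('g, 'b) monoid_scheme \<Rightarrow> ('g \<Rightarrow> 'a \<Rightarrow> 'a) \<Rightarrow> (nat \<Rightarrow> 'a set) \<Rightarrow> nat \<Rightarrow> 'g set \<Rightarrow> bool" where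
  "indep_set G \<phi> A k J \<longleftrightarrow> J \<subseteq> carrier G \<and>
     (\<forall>I. I \<subseteq> J \<longrightarrow> I \<noteq> {} \<longrightarrow> finite I \<longrightarrow>
        (\<forall>s. (\<forall>g\<in>I. s g < k) \<longrightarrow> (\<Inter>g\<in>I. \<phi> (inv\<^bsub>G\<^esub> g) ` A (s g)) \<noteq> {}))"

text \<open>Tuples (x_0,...,x_{n-1}) are functions nat => 'a restricted to indices < n.
Product neighbourhoods are tuples of (relatively) open subsets of X containing x_i.\<close>
definition IN_tuple :: "('g, 'b) monoid_scheme \<Rightarrow> ('g \<Rightarrow> 'a::metric_space \<Rightarrow> 'a) \<Rightarrow> 'a set \<Rightarrow> nat \<Rightarrow> (nat \<Rightarrow> 'a) \<Rightarrow> bool" where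
  "IN_tuple G \<phi> X n x \<longleftrightarrow>
     (\<forall>U. (\<forall>i<n. openin (top_of_set X) (U i) \<and> x i \<in> U i) \<longrightarrow>
        (\<forall>m. \<exists>J. finite J \<and> m \<le> card J \<and> indep_set G \<phi> U n J))"

definition IT_tuple :: "('g, 'b) monoid_scheme \<Rightarrow> ('g \<Rightarrow> 'a::metric_space \<Rightarrow> 'a) \<Rightarrow> 'a set \<Rightarrow> nat \<Rightarrow> (nat \<Rightarrow> 'a) \<Rightarrow> bool" where
  "IT_tuple G \<phi> X n x \<longleftrightarrow>
     (\<forall>U. (\<forall>i<n. openin (top_of_set X) (U i) \<and> x i \<in> U i) \<longrightarrow>
        (\<exists>J. infinite J \<and> indep_set G \<phi> U n J))"

definition regionally_proximal :: "('g, 'b) monoid_scheme \<Rightarrow> ('g \<Rightarrow> 'a::metric_space \<Rightarrow> 'a) \<Rightarrow> 'a set \<Rightarrow> nat \<Rightarrow> (nat \<Rightarrow> 'a) \<Rightarrow> bool" where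
  "regionally_proximal G \<phi> X n x \<longleftrightarrow>
     (\<forall>\<epsilon>>0. \<exists>x'. (\<forall>i<n. x' i \<in> X \<and> dist (x i) (x' i) < \<epsilon>) \<and>
        (\<exists>g\<in>carrier G. \<forall>i<n. \<forall>j<n. dist (\<phi> g (x' i)) (\<phi> g (x' j)) < \<epsilon>))"

end

theory Submission
  imports Defs
begin

text \<open>If \<open>a \<noteq> b\<close> lie in an independence set of \<open>(U\<^sub>0, \<dots>, U\<^sub>n\<^sub>-\<^sub>1)\<close>, independence
applied to the pattern \<open>a \<mapsto> i, b \<mapsto> 0\<close> gives a point \<open>u\<^sub>i \<in> U\<^sub>i\<close> with
\<open>\<phi> (b a\<inverse>) u\<^sub>i \<in> U\<^sub>0\<close>. So the single element \<open>b a\<inverse>\<close> moves points near every \<open>x\<^sub>i\<close> into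
one small ball around \<open>x\<^sub>0\<close>. Only two elements of an independence set are needed, and
IN-tuples and IT-tuples both provide them.\<close>

lemma indep_set_pair_meets:
  assumes "indep_set G \<phi> A k J" "a \<in> J" "b \<in> J" "a \<noteq> b" "i < k" "j < k"
  shows "\<phi> (inv\<^bsub>G\<^esub> a) ` A i \<inter> \<phi> (inv\<^bsub>G\<^esub> b) ` A j \<noteq> {}"
proof -
  let ?s = "\<lambda>g. if g = a then i else j"
  have "(\<Inter>g\<in>{a, b}. \<phi> (inv\<^bsub>G\<^esub> g) ` A (?s g)) \<noteq> {}"
    by (rule assms(1)[unfolded indep_set_def, THEN conjunct2, rule_format]) (use assms in auto)
  then show ?thesis
    using assms(4) by simp
qed

lemma dyn_system_transport:
  assumes "dyn_system G \<phi> X" "a \<in> carrier G" "b \<in> carrier G" "u \<in> X" "v \<in> X"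
    and "\<phi> (inv\<^bsub>G\<^esub> a) u = \<phi> (inv\<^bsub>G\<^esub> b) v"
  shows "\<phi> (b \<otimes>\<^bsub>G\<^esub> inv\<^bsub>G\<^esub> a) u = v"
proof -
  interpret group G
    using assms(1) by (simp add: dyn_system_def)
  have act: "\<phi> (g \<otimes>\<^bsub>G\<^esub> h) z = \<phi> g (\<phi> h z)" if "g \<in> carrier G" "h \<in> carrier G" "z \<in> X" for g h z
    using assms(1) that by (simp add: dyn_system_def)
  have "\<phi> (b \<otimes>\<^bsub>G\<^esub> inv\<^bsub>G\<^esub> a) u = \<phi> b (\<phi> (inv\<^bsub>G\<^esub> b) v)"
    using assms by (simp add: act)
  also have "\<dots> = v"
    using act[of b "inv\<^bsub>G\<^esub> b" v] assms by (simp add: dyn_system_def)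
  finally show ?thesis .
qed

lemma indep_pair_translates_into_first_set:
  assumes ds: "dyn_system G \<phi> X" and sub: "\<forall>i<n. A i \<subseteq> X"
    and ind: "indep_set G \<phi> A n J" and ab: "a \<in> J" "b \<in> J" "a \<noteq> b" and n: "0 < n"
  obtains u g where "\<forall>i<n. u i \<in> A i" "g \<in> carrier G" "\<forall>i<n. \<phi> g (u i) \<in> A 0"
proof -
  interpret group G
    using ds by (simp add: dyn_system_def)
  have carrier: "a \<in> carrier G" "b \<in> carrier G"
    using ind ab by (auto simp: indep_set_def)
  have "\<exists>p. fst p \<in> A i \<and> snd p \<in> A 0 \<and> \<phi> (inv\<^bsub>G\<^esub> a) (fst p) = \<phi> (inv\<^bsub>G\<^esub> b) (snd p)"
    if "i < n" for i
    using indep_set_pair_meets[OF ind ab, of i 0] that n by fastforce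
  then obtain p where p: "\<And>i. i < n \<Longrightarrow> fst (p i) \<in> A i \<and> snd (p i) \<in> A 0 \<and>
      \<phi> (inv\<^bsub>G\<^esub> a) (fst (p i)) = \<phi> (inv\<^bsub>G\<^esub> b) (snd (p i))"
    by metis
  have "\<phi> (b \<otimes>\<^bsub>G\<^esub> inv\<^bsub>G\<^esub> a) (fst (p i)) \<in> A 0" if "i < n" for i
  proof -
    have "fst (p i) \<in> X" "snd (p i) \<in> X"
      using p[OF that] sub that n by auto
    then show ?thesis
      using dyn_system_transport[OF ds carrier] p[OF that] by simp
  qed
  then show ?thesis
    using that[of "\<lambda>i. fst (p i)" "b \<otimes>\<^bsub>G\<^esub> inv\<^bsub>G\<^esub> a"] p carrier by auto
qed

lemma regionally_proximal_if_indep_pairs: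
  assumes ds: "dyn_system G \<phi> X" and x: "\<forall>i<n. x i \<in> X"
    and pairs: "\<And>U. \<forall>i<n. openin (top_of_set X) (U i) \<and> x i \<in> U i \<Longrightarrow>
      \<exists>J a b. indep_set G \<phi> U n J \<and> a \<in> J \<and> b \<in> J \<and> a \<noteq> b"
  shows "regionally_proximal G \<phi> X n x"
proof (cases "n = 0")
  case True
  have "\<one>\<^bsub>G\<^esub> \<in> carrier G"
    using ds by (simp add: dyn_system_def group.is_monoid monoid.one_closed)
  then show ?thesis
    using True by (auto simp: regionally_proximal_def)
next
  case False
  show ?thesis
    unfolding regionally_proximal_def
  proof (intro allI impI)
    fix \<epsilon> :: real
    assume "\<epsilon> > 0"
    define U where "U i = X \<inter> ball (x i) (\<epsilon> / 2)" for i
    have "\<forall>i<n. openin (top_of_set X) (U i) \<and> x i \<in> U i"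
      using x \<open>\<epsilon> > 0\<close> by (auto simp: U_def intro: openin_open_Int)
    then obtain J a b where J: "indep_set G \<phi> U n J" "a \<in> J" "b \<in> J" "a \<noteq> b"
      using pairs by blast
    have "\<forall>i<n. U i \<subseteq> X"
      by (simp add: U_def)
    then obtain u g where u: "\<forall>i<n. u i \<in> U i" and g: "g \<in> carrier G"
      and gu: "\<forall>i<n. \<phi> g (u i) \<in> U 0"
      using indep_pair_translates_into_first_set[OF ds _ J] False by blast
    have "dist (\<phi> g (u i)) (\<phi> g (u j)) < \<epsilon>" if "i < n" "j < n" for i j
    proof -
      have "dist (\<phi> g (u i)) (\<phi> g (u j)) \<le> dist (x 0) (\<phi> g (u i)) + dist (x 0) (\<phi> g (u j))"
        by (rule dist_triangle3)
      also have "\<dots> < \<epsilon>"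
      proof -
        have "dist (x 0) (\<phi> g (u i)) < \<epsilon> / 2" "dist (x 0) (\<phi> g (u j)) < \<epsilon> / 2"
          using gu that by (simp_all add: U_def)
        then show ?thesis
          by linarith
      qed
      finally show ?thesis .
    qed
    moreover have "u i \<in> X \<and> dist (x i) (u i) < \<epsilon>" if "i < n" for i
      using u that \<open>\<epsilon> > 0\<close> by (auto simp: U_def)
    ultimately show "\<exists>x'. (\<forall>i<n. x' i \<in> X \<and> dist (x i) (x' i) < \<epsilon>) \<and>
        (\<exists>g\<in>carrier G. \<forall>i<n. \<forall>j<n. dist (\<phi> g (x' i)) (\<phi> g (x' j)) < \<epsilon>)"
      using g by blast
  qed
qed

lemma IN_tuple_indep_pair:
  assumes "IN_tuple G \<phi> X n x" "\<forall>i<n. openin (top_of_set X) (U i) \<and> x i \<in> U i"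
  shows "\<exists>J a b. indep_set G \<phi> U n J \<and> a \<in> J \<and> b \<in> J \<and> a \<noteq> b"
proof -
  obtain J where J: "finite J" "2 \<le> card J" "indep_set G \<phi> U n J"
    using assms unfolding IN_tuple_def by blast
  then obtain S where "S \<subseteq> J" "card S = 2"
    by (meson obtain_subset_with_card_n)
  then show ?thesis
    using J(3) by (auto simp: card_2_iff)
qed

lemma IT_tuple_indep_pair:
  assumes "IT_tuple G \<phi> X n x" "\<forall>i<n. openin (top_of_set X) (U i) \<and> x i \<in> U i"
  shows "\<exists>J a b. indep_set G \<phi> U n J \<and> a \<in> J \<and> b \<in> J \<and> a \<noteq> b"
proof -
  obtain J where J: "infinite J" "indep_set G \<phi> U n J"
    using assms unfolding IT_tuple_def by blast
  then obtain S where "S \<subseteq> J" "card S = 2"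
    by (meson infinite_arbitrarily_large)
  then show ?thesis
    using J(2) by (auto simp: card_2_iff)
qed

theorem proposition2p6:
  fixes G :: "('g, 'b) monoid_scheme" and \<phi> :: "'g \<Rightarrow> 'a::metric_space \<Rightarrow> 'a"
    and X :: "'a set" and n :: nat and x :: "nat \<Rightarrow> 'a"
  assumes "dyn_system G \<phi> X"
    and "\<forall>i<n. x i \<in> X"
  shows "(IN_tuple G \<phi> X n x \<longrightarrow> regionally_proximal G \<phi> X n x) \<and>
         (IT_tuple G \<phi> X n x \<longrightarrow> regionally_proximal G \<phi> X n x)"
proof (intro conjI impI)
  show "regionally_proximal G \<phi> X n x" if "IN_tuple G \<phi> X n x"
    using regionally_proximal_if_indep_pairs[OF assms] IN_tuple_indep_pair[OF that] by blast
  show "regionally_proximal G \<phi> X n x" if "IT_tuple G \<phi> X n x"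
    using regionally_proximal_if_indep_pairs[OF assms] IT_tuple_indep_pair[OF that] by blast
qed

end
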